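(* Let $G_a$ and $G_b$ be graphs on a vertex set $V$ with $|V|=n$, let $h\le n-2$, and let $\mathbf w_a=f_h(G_a)$, $\mathbf w_b=f_h(G_b)$. If $\delta_{a,i}>\delta_{a,i+1}+2$ for all $i\in[h]$, then $\mathbf w_a=\mathbf w_a^U$ for every set $U\subseteq V$ of two vertices containing no entry of $\mathbf w_a$. Similarly, if $\delta_{b,i}>\delta_{b,i+1}+2$ for all $i\in[h]$, then $\mathbf w_b=\mathbf w_b^U$ for every two-vertex set $U\subseteq V$ containing no entry of $\mathbf w_b$.
   Context: For a graph $G$, $\delta_G=(\delta_{G,1},\dots,\delta_{G,n})$ is its degree sequence in decreasing order, with $\delta_{a,i}=\delta_{G_a,i}$, $\delta_{b,i}=\delta_{G_b,i}$. $f_h(G)$ is the vector $(w_1,\dots,w_h)$ of $h$ distinct vertices with $\deg_G(w_i)=\delta_{G,i}$ (the $h$ highest-degree vertices sorted by decreasing degree, ties broken arbitrarily). For a two-vertex set $U\subseteq V$, $\mathbf w_a^U=f_h(G_a[V\setminus U])$ and $\mathbf w_b^U=f_h(G_b[V\setminus U])$, where $G[W]$ denotes the induced subgraph on $W$. *)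

theory Defs
  imports Main "HOL-Library.Multiset"
begin

definition simple_graph :: "'a set \<Rightarrow> ('a \<Rightarrow> 'a \<Rightarrow> bool) \<Rightarrow> bool" where
  "simple_graph V E \<longleftrightarrow> finite V \<and> (\<forall>u v. E u v \<longrightarrow> E v u) \<and> (\<forall>v. \<not> E v v)
     \<and> (\<forall>u v. E u v \<longrightarrow> u \<in> V \<and> v \<in> V)"

definition ideg :: "('a \<Rightarrow> 'a \<Rightarrow> bool) \<Rightarrow> 'a set \<Rightarrow> 'a \<Rightarrow> nat" where
  "ideg E W v = card {u \<in> W. E u v}"

text \<open>Degree sequence of G[W] in decreasing order (0-based list: entry i is delta_(i+1)).\<close>
definition dseq :: "('a \<Rightarrow> 'a \<Rightarrow> bool) \<Rightarrow> 'a set \<Rightarrow> nat list" where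
  "dseq E W = rev (sorted_list_of_multiset (image_mset (ideg E W) (mset_set W)))"

text \<open>w is a valid value of f_h(G[W]) (ties broken arbitrarily): h distinct vertices of W,
  the i-th having degree delta_i in G[W].\<close>
definition is_fh :: "('a \<Rightarrow> 'a \<Rightarrow> bool) \<Rightarrow> 'a set \<Rightarrow> nat \<Rightarrow> 'a list \<Rightarrow> bool" where
  "is_fh E W h w \<longleftrightarrow> length w = h \<and> distinct w \<and> set w \<subseteq> W
     \<and> (\<forall>i<h. ideg E W (w ! i) = dseq E W ! i)"

end

theory Submission
  imports Defs
begin

text \<open>At most h vertices have degree above the (h+1)-st largest degree, and by the gaps the
  h entries of w all do, so every other vertex has at most that degree. Deleting the two
  vertices of U lowers each degree by at most two, hence in G[V - U] the degrees along w still
  strictly decrease and strictly dominate all remaining vertices; then the degree sequence of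
  G[V - U] begins with the degrees along w, and w is the only admissible value of f_h.\<close>

lemma length_dseq: "length (dseq E W) = card W"
  by (metis dseq_def length_rev mset_sorted_list_of_multiset size_image_mset size_mset
      size_mset_set)

lemma dseq_nth_antimono:
  assumes "i \<le> j" "j < card W"
  shows "dseq E W ! j \<le> dseq E W ! i"
proof -
  have "sorted_wrt (\<ge>) (dseq E W)"
    by (simp add: dseq_def sorted_wrt_rev)
  then show ?thesis
    using assms by (cases "i = j") (auto simp: sorted_wrt_iff_nth_less length_dseq)
qed

lemma card_ideg_above_dseq_nth:
  assumes k: "k < card W"
  shows "card {v \<in> W. dseq E W ! k < ideg E W v} \<le> k"
proof -
  define D where "D = dseq E W"
  define P where "P = (\<lambda>x. D ! k < x)"
  have fin: "finite W"
    using k card.infinite by fastforce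
  have "filter P (drop k D) = []"
    using dseq_nth_antimono[of k _ W E] k
    by (auto simp: filter_empty_conv P_def D_def in_set_conv_nth length_dseq not_less)
  then have "length (filter P D) \<le> k"
    by (metis append_Nil2 append_take_drop_id filter_append length_filter_le
        length_take min.bounded_iff)
  moreover have "mset (filter P D) = image_mset (ideg E W) (mset_set {v \<in> W. P (ideg E W v)})"
    using fin by (simp add: D_def dseq_def filter_mset_image_mset)
  then have "length (filter P D) = card {v \<in> W. P (ideg E W v)}"
    by (metis size_image_mset size_mset size_mset_set)
  ultimately show ?thesis
    by (simp add: P_def D_def)
qed

lemma ideg_Diff_le: "finite V \<Longrightarrow> ideg E (V - U) v \<le> ideg E V v"
  unfolding ideg_def by (rule card_mono) auto

lemma ideg_le_ideg_Diff_add_card: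
  assumes "finite V" "U \<subseteq> V"
  shows "ideg E V v \<le> ideg E (V - U) v + card U"
proof -
  have "{u \<in> V. E u v} \<subseteq> {u \<in> V - U. E u v} \<union> U"
    by auto
  then have "ideg E V v \<le> card ({u \<in> V - U. E u v} \<union> U)"
    unfolding ideg_def using assms by (intro card_mono) (auto intro: finite_subset)
  also have "\<dots> \<le> ideg E (V - U) v + card U"
    unfolding ideg_def by (rule card_Un_le)
  finally show ?thesis .
qed

lemma rev_sorted_list_of_image_mset_nth:
  fixes f :: "'a \<Rightarrow> 'b::linorder"
  assumes W: "finite W" and dx: "distinct x" and sx: "set x \<subseteq> W"
    and sw: "sorted_wrt (>) (map f x)"
    and dom: "\<forall>v\<in>W - set x. \<forall>y\<in>set x. f v < f y"
    and i: "i < length x"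
  shows "rev (sorted_list_of_multiset (image_mset f (mset_set W))) ! i = f (x ! i)"
proof -
  define M where "M = image_mset f (mset_set (W - set x))"
  define L where "L = map f x @ rev (sorted_list_of_multiset M)"
  have "mset_set W = mset_set (set x) + mset_set (W - set x)"
    using W sx by (metis Un_Diff_cancel finite_Diff finite_set mset_set_Union
        Diff_disjoint sup.absorb2)
  then have "image_mset f (mset_set W) = mset (rev L)"
    using dx by (simp add: L_def M_def mset_set_set)
  moreover have "sorted_wrt (\<ge>) L"
    unfolding L_def sorted_wrt_append
    using sorted_wrt_mono_rel[OF _ sw, of "(\<ge>)"] dom W
    by (auto simp: sorted_wrt_rev M_def intro: less_imp_le)
  then have "sorted (rev L)"
    by (simp add: sorted_wrt_rev)
  ultimately have "sorted_list_of_multiset (image_mset f (mset_set W)) = rev L"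
    by (simp only: sorted_list_of_multiset_mset sorted_sort_id)
  then show ?thesis
    using i by (simp add: L_def nth_append)
qed

lemma is_fh_unique_of_dominating:
  assumes W: "finite W" and dx: "distinct x" and sx: "set x \<subseteq> W"
    and sw: "sorted_wrt (>) (map (ideg E W) x)"
    and dom: "\<forall>v\<in>W - set x. \<forall>y\<in>set x. ideg E W v < ideg E W y"
    and w: "is_fh E W (length x) w"
  shows "w = x"
proof (rule nth_equalityI)
  show "length w = length x"
    using w by (simp add: is_fh_def)
  fix i assume "i < length w"
  then have i: "i < length x" and wi: "w ! i \<in> W"
    using w by (auto simp: is_fh_def)
  have deg: "ideg E W (w ! i) = ideg E W (x ! i)"
    using w i rev_sorted_list_of_image_mset_nth[OF W dx sx sw dom i]
    by (simp add: is_fh_def dseq_def)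
  show "w ! i = x ! i"
  proof (cases "w ! i \<in> set x")
    case True
    then obtain j where j: "j < length x" "w ! i = x ! j"
      by (auto simp: in_set_conv_nth)
    then have "\<not> i < j" "\<not> j < i"
      using sw deg i by (auto simp: sorted_wrt_iff_nth_less) (metis less_irrefl)+
    then show ?thesis
      using j by simp
  next
    case False
    then show ?thesis
      using dom wi deg i by (metis DiffI less_irrefl nth_mem)
  qed
qed

lemma is_fh_Diff_eq_of_gaps:
  assumes fin: "finite V" and h: "h < card V" and w: "is_fh E V h w"
    and gap: "\<And>i. i < h \<Longrightarrow> dseq E V ! (i + 1) + card U < dseq E V ! i"
    and U: "U \<subseteq> V" "set w \<inter> U = {}"
    and w': "is_fh E (V - U) h w'"
  shows "w' = w"
proof -
  define D where "D = dseq E V"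
  define d where "d = ideg E V"
  define d' where "d' = ideg E (V - U)"
  have lw: "length w = h" and dw: "distinct w" and sw: "set w \<subseteq> V"
    and deg_w: "\<And>i. i < h \<Longrightarrow> d (w ! i) = D ! i"
    using w by (auto simp: is_fh_def d_def D_def)
  have gap_D: "D ! (i + 1) + card U < D ! i" if "i < h" for i
    using gap that by (simp add: D_def)
  have D_mono: "D ! j \<le> D ! (i + 1)" if "i < j" "j \<le> h" for i j
    using that h dseq_nth_antimono[of "i + 1" j V E] unfolding D_def by simp
  have d'_le: "d' v \<le> d v" and d_le: "d v \<le> d' v + card U" for v
    using ideg_Diff_le[OF fin] ideg_le_ideg_Diff_add_card[OF fin U(1)]
    by (auto simp: d_def d'_def)
  have above: "D ! h + card U < d y" if y: "y \<in> set w" for y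
  proof -
    obtain i where "i < length w" "y = w ! i"
      using y by (auto simp: in_set_conv_nth)
    with lw show ?thesis
      using gap_D[of i] D_mono[of i h] deg_w[of i] by simp
  qed
  have outside: "d v \<le> D ! h" if "v \<in> V" "v \<notin> set w" for v
  proof (rule ccontr)
    assume "\<not> d v \<le> D ! h"
    with above sw that have "insert v (set w) \<subseteq> {u \<in> V. D ! h < d u}"
      by fastforce
    then have "card (insert v (set w)) \<le> card {u \<in> V. D ! h < d u}"
      using fin by (intro card_mono) auto
    also have "\<dots> \<le> h"
      using card_ideg_above_dseq_nth[of h V E] h by (simp add: D_def d_def)
    finally have "card (insert v (set w)) \<le> h" .
    then show False
      using that dw lw by (simp add: distinct_card)
  qed
  have strict: "d' (w ! j) < d' (w ! i)" if "i < j" "j < h" for i j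
    using that D_mono[of i j] gap_D[of i] deg_w[of i] deg_w[of j] d'_le[of "w ! j"]
      d_le[of "w ! i"] by simp
  have dominating: "d' v < d' y" if "v \<in> V" "v \<notin> set w" "y \<in> set w" for v y
    using outside[OF that(1,2)] above[OF that(3)] d'_le[of v] d_le[of y] by simp
  show ?thesis
  proof (rule is_fh_unique_of_dominating)
    show "sorted_wrt (>) (map (ideg E (V - U)) w)"
      using strict by (simp add: sorted_wrt_iff_nth_less lw d'_def)
    show "\<forall>v\<in>V - U - set w. \<forall>y\<in>set w. ideg E (V - U) v < ideg E (V - U) y"
      using dominating by (simp add: d'_def)
  qed (use fin dw sw U(2) w' lw in auto)
qed

theorem lemma4p13:
  fixes V :: "'a set" and Ea Eb :: "'a \<Rightarrow> 'a \<Rightarrow> bool" and n h :: nat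
    and wa wb :: "'a list"
  assumes ga: "simple_graph V Ea" and gb: "simple_graph V Eb"
    and n: "card V = n" and h: "h + 2 \<le> n"
    and wa: "is_fh Ea V h wa" and wb: "is_fh Eb V h wb"
  shows "((\<forall>i\<in>{1..h}. dseq Ea V ! (i - 1) > dseq Ea V ! i + 2) \<longrightarrow>
            (\<forall>U. U \<subseteq> V \<and> card U = 2 \<and> set wa \<inter> U = {} \<longrightarrow>
                 (\<forall>w'. is_fh Ea (V - U) h w' \<longrightarrow> w' = wa)))
       \<and> ((\<forall>i\<in>{1..h}. dseq Eb V ! (i - 1) > dseq Eb V ! i + 2) \<longrightarrow>
            (\<forall>U. U \<subseteq> V \<and> card U = 2 \<and> set wb \<inter> U = {} \<longrightarrow>
                 (\<forall>w'. is_fh Eb (V - U) h w' \<longrightarrow> w' = wb)))"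
proof -
  have fin: "finite V" and h': "h < card V"
    using ga h n by (auto simp: simple_graph_def)
  have "(\<forall>i\<in>{1..h}. dseq E V ! (i - 1) > dseq E V ! i + 2) \<longrightarrow>
          (\<forall>U. U \<subseteq> V \<and> card U = 2 \<and> set w \<inter> U = {} \<longrightarrow>
               (\<forall>w'. is_fh E (V - U) h w' \<longrightarrow> w' = w))"
    if w: "is_fh E V h w" for E w
  proof (intro impI allI)
    fix U w'
    assume "\<forall>i\<in>{1..h}. dseq E V ! (i - 1) > dseq E V ! i + 2"
    then have gap: "dseq E V ! (i + 1) + 2 < dseq E V ! i" if "i < h" for i
      using that by (metis One_nat_def Suc_leI add_diff_cancel_right' atLeastAtMost_iff
          le_add2 Suc_eq_plus1)
    assume U: "U \<subseteq> V \<and> card U = 2 \<and> set w \<inter> U = {}" and w': "is_fh E (V - U) h w'"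
    show "w' = w"
      using U gap by (intro is_fh_Diff_eq_of_gaps[OF fin h' w _ _ _ w']) auto
  qed
  then show ?thesis
    using wa wb by blast
qed

end
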